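(* Let $q$ be a prime, let $d=\pi(q-1)$, let $p_1<\dots<p_d$ be the primes less than $q$, and for $n\in\{1,\dots,q-1\}$ with $n=\prod_{i=1}^d p_i^{\mu_i(n)}$ define the linear form $\mathscr{L}_n:\mathbb{F}_q^d\to\mathbb{F}_q$, $\mathscr{L}_n(\mathbf{v})=\sum_{i=1}^d\mu_i(n)v_i$. Let $k\in\mathbb{N}$. (a) If $n_1,\dots,n_k\in\{1,\dots,q-1\}$ are multiplicatively dependent, then $\mathscr{L}_{n_1},\dots,\mathscr{L}_{n_k}$ are $\mathbb{F}_q$-dependent. (b) Suppose $k<\frac{\log q}{10\log_2 q}$. Then $n_1,\dots,n_k\in\{2,3,\dots,q-1\}$ are multiplicatively independent if and only if $\mathscr{L}_{n_1},\dots,\mathscr{L}_{n_k}$ are $\mathbb{F}_q$-independent.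
   Context: Integers $n_1,\dots,n_r$ are multiplicatively independent if $\alpha_1=\dots=\alpha_r=0$ is the only integer solution of $n_1^{\alpha_1}\cdots n_r^{\alpha_r}=1$, and multiplicatively dependent otherwise. Forms $\mathscr{L}_{n_1},\dots,\mathscr{L}_{n_k}$ are $\mathbb{F}_q$-independent if $\alpha_1\mathscr{L}_{n_1}+\dots+\alpha_k\mathscr{L}_{n_k}=0$ (as a function on $\mathbb{F}_q^d$) with $\alpha_i\in\mathbb{F}_q$ forces all $\alpha_i=0$, and $\mathbb{F}_q$-dependent otherwise. $\log x:=\max\{\ln x,2\}$, $\log_2 x=\log\log x$; $\pi(x)$ is the number of primes $\le x$. *)

theory Defs
  imports Complex_Main "HOL-Computational_Algebra.Primes"
begin

text \<open>The paper's logarithm: log x := max (ln x) 2, and log_2 x := log (log x).\<close>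
definition plog :: "real \<Rightarrow> real" where
  "plog x = max (ln x) 2"

definition plog2 :: "real \<Rightarrow> real" where
  "plog2 x = plog (plog x)"

text \<open>Elements of F_q are represented by the integers 0..q-1 with arithmetic mod q.
  Vectors of F_q^d are indexed by the primes p < q (coordinate p_i = coordinate i).\<close>
definition Lform :: "nat \<Rightarrow> nat \<Rightarrow> (nat \<Rightarrow> int) \<Rightarrow> int" where
  "Lform q n v = (\<Sum>p\<in>{p. prime p \<and> p < q}. int (multiplicity p n) * v p) mod int q"

definition Fq_dependent :: "nat \<Rightarrow> nat \<Rightarrow> (nat \<Rightarrow> nat) \<Rightarrow> bool" where
  "Fq_dependent q k n =
     (\<exists>\<alpha>::nat \<Rightarrow> int. (\<forall>i<k. \<alpha> i \<in> {0..<int q}) \<and> (\<exists>i<k. \<alpha> i \<noteq> 0) \<and>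
        (\<forall>v::nat \<Rightarrow> int. (\<forall>p. v p \<in> {0..<int q}) \<longrightarrow>
            (\<Sum>i<k. \<alpha> i * Lform q (n i) v) mod int q = 0))"

definition Fq_independent :: "nat \<Rightarrow> nat \<Rightarrow> (nat \<Rightarrow> nat) \<Rightarrow> bool" where
  "Fq_independent q k n = (\<not> Fq_dependent q k n)"

definition mult_dependent :: "nat \<Rightarrow> (nat \<Rightarrow> nat) \<Rightarrow> bool" where
  "mult_dependent k n =
     (\<exists>\<alpha>::nat \<Rightarrow> int. (\<exists>i<k. \<alpha> i \<noteq> 0) \<and> (\<Prod>i<k. real (n i) powi \<alpha> i) = 1)"

definition mult_independent :: "nat \<Rightarrow> (nat \<Rightarrow> nat) \<Rightarrow> bool" where
  "mult_independent k n = (\<not> mult_dependent k n)"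

end

theory Submission
  imports Defs "Jordan_Normal_Form.Determinant"
begin

text \<open>Both kinds of dependence are statements about the exponent vectors
  \<open>e\<^sub>i = (\<mu>\<^sub>p(n\<^sub>i))\<^sub>p\<close>: multiplicative dependence is an integer relation among them,
  \<open>\<F>\<^sub>q\<close>-dependence a relation modulo \<open>q\<close>. An integer relation divided by the gcd of
  its coefficients stays nonzero modulo \<open>q\<close>, which gives (a). For (b), if the \<open>e\<^sub>i\<close> are
  independent over \<open>\<int>\<close>, their Gram matrix \<open>G\<close> has \<open>det G \<noteq> 0\<close>, while a relation
  modulo \<open>q\<close> forces \<open>q dvd det G\<close>. Since \<open>n\<^sub>i < q\<close>, every \<open>e\<^sub>i\<close> has entry sum
  \<open>T \<le> log\<^sub>2 q\<close>, so \<open>|det G| \<le> k! T\<^sup>2\<^sup>k < q\<close> when \<open>k\<close> is small, a contradiction.\<close>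

lemma multiplicity_prod_power:
  fixes p :: nat and f :: "nat \<Rightarrow> nat"
  assumes "prime p" "\<And>i. i < k \<Longrightarrow> f i > 0"
  shows "multiplicity p (\<Prod>i<k. f i ^ a i) = (\<Sum>i<k. a i * multiplicity p (f i))"
proof -
  have "multiplicity p (\<Prod>i<k. f i ^ a i) = (\<Sum>i<k. multiplicity p (f i ^ a i))"
    by (rule prime_elem_multiplicity_prod_distrib) (use assms in \<open>auto dest!: assms(2)\<close>)
  also have "\<dots> = (\<Sum>i<k. a i * multiplicity p (f i))"
    by (rule sum.cong) (use assms in \<open>auto intro!: prime_elem_multiplicity_power_distrib\<close>)
  finally show ?thesis .
qed

lemma prod_powi_eq_1_iff:
  fixes n :: "nat \<Rightarrow> nat" and \<beta> :: "nat \<Rightarrow> int"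
  assumes "\<And>i. i < k \<Longrightarrow> n i > 0"
  shows "(\<Prod>i<k. real (n i) powi \<beta> i) = 1 \<longleftrightarrow>
    (\<forall>p. prime p \<longrightarrow> (\<Sum>i<k. \<beta> i * int (multiplicity p (n i))) = 0)"
proof -
  define a where "a i = nat (max (\<beta> i) 0)" for i
  define b where "b i = nat (max (- \<beta> i) 0)" for i
  define A where "A = (\<Prod>i<k. n i ^ a i)"
  define B where "B = (\<Prod>i<k. n i ^ b i)"
  have "A > 0" "B > 0" unfolding A_def B_def using assms by (force intro!: prod_pos)+
  have "real (n i) powi \<beta> i = real (n i) ^ a i / real (n i) ^ b i" if "i < k" for i
    using assms[OF that] by (auto simp: a_def b_def power_int_def field_simps)
  then have "(\<Prod>i<k. real (n i) powi \<beta> i) = (\<Prod>i<k. real (n i) ^ a i / real (n i) ^ b i)"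
    by simp
  also have "\<dots> = real A / real B"
    by (simp add: A_def B_def prod_dividef)
  finally have "(\<Prod>i<k. real (n i) powi \<beta> i) = 1 \<longleftrightarrow> A = B"
    using \<open>B > 0\<close> by auto
  also have "\<dots> \<longleftrightarrow> (\<forall>p. prime p \<longrightarrow> multiplicity p A = multiplicity p B)"
    using multiplicity_eq_imp_eq[of A B] \<open>A > 0\<close> \<open>B > 0\<close> by auto
  also have "\<dots> \<longleftrightarrow> (\<forall>p. prime p \<longrightarrow> (\<Sum>i<k. \<beta> i * int (multiplicity p (n i))) = 0)"
  proof -
    have "multiplicity p A = multiplicity p B \<longleftrightarrow>
        (\<Sum>i<k. \<beta> i * int (multiplicity p (n i))) = 0" if "prime p" for p
    proof -
      have "(\<Sum>i<k. \<beta> i * int (multiplicity p (n i))) =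
          (\<Sum>i<k. (int (a i) - int (b i)) * int (multiplicity p (n i)))"
        by (rule sum.cong) (auto simp: a_def b_def)
      also have "\<dots> = int (multiplicity p A) - int (multiplicity p B)"
        unfolding A_def B_def using multiplicity_prod_power[OF that assms]
        by (simp add: sum_subtractf left_diff_distrib)
      finally show ?thesis by simp
    qed
    then show ?thesis by blast
  qed
  finally show ?thesis .
qed

text \<open>For \<open>0 < n\<^sub>i < q\<close> only the primes below \<open>q\<close> occur in the \<open>n\<^sub>i\<close>.\<close>
lemma mult_dependent_iff_relation:
  assumes "\<forall>i<k. n i \<in> {1..q-1}"
  shows "mult_dependent k n \<longleftrightarrow> (\<exists>\<beta>. (\<exists>i<k. \<beta> i \<noteq> 0) \<and>
    (\<forall>p. prime p \<and> p < q \<longrightarrow> (\<Sum>i<k. \<beta> i * int (multiplicity p (n i))) = 0))"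
proof -
  have "multiplicity p (n i) = 0" if "q \<le> p" "i < k" for p i
  proof (rule not_dvd_imp_multiplicity_0)
    have "0 < n i" "n i < q" using assms \<open>i < k\<close> by auto
    then show "\<not> p dvd n i" using \<open>q \<le> p\<close> by (auto dest: dvd_imp_le)
  qed
  then have "(\<Sum>i<k. \<beta> i * int (multiplicity p (n i))) = 0" if "\<not> p < q" for p \<beta>
    using that by simp
  then have "(\<forall>p. prime p \<longrightarrow> (\<Sum>i<k. \<beta> i * int (multiplicity p (n i))) = 0) \<longleftrightarrow>
      (\<forall>p. prime p \<and> p < q \<longrightarrow> (\<Sum>i<k. \<beta> i * int (multiplicity p (n i))) = 0)" for \<beta>
    by blast
  moreover have "\<And>i. i < k \<Longrightarrow> n i > 0" using assms by auto
  ultimately show ?thesis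
    unfolding mult_dependent_def by (simp add: prod_powi_eq_1_iff)
qed

lemma sum_Lform_mod:
  "(\<Sum>i<k. \<alpha> i * Lform q (n i) v) mod int q =
    (\<Sum>p\<in>{p. prime p \<and> p < q}. v p * (\<Sum>i<k. \<alpha> i * int (multiplicity p (n i)))) mod int q"
proof -
  define P where "P = {p. prime p \<and> p < q}"
  define S where "S i = (\<Sum>p\<in>P. int (multiplicity p (n i)) * v p)" for i
  have "(\<Sum>i<k. \<alpha> i * Lform q (n i) v) mod int q =
      (\<Sum>i<k. \<alpha> i * (S i mod int q) mod int q) mod int q"
    by (simp add: Lform_def S_def P_def mod_sum_eq)
  also have "\<dots> = (\<Sum>i<k. \<alpha> i * S i mod int q) mod int q"
    by (simp add: mod_mult_right_eq)
  also have "\<dots> = (\<Sum>i<k. \<alpha> i * (\<Sum>p\<in>P. int (multiplicity p (n i)) * v p)) mod int q"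
    by (simp add: S_def mod_sum_eq)
  also have "(\<Sum>i<k. \<alpha> i * (\<Sum>p\<in>P. int (multiplicity p (n i)) * v p)) =
      (\<Sum>p\<in>P. v p * (\<Sum>i<k. \<alpha> i * int (multiplicity p (n i))))"
    by (simp add: sum_distrib_left mult_ac sum.swap[of _ P])
  finally show ?thesis unfolding P_def .
qed

lemma Fq_dependent_iff_relation:
  assumes "2 \<le> q"
  shows "Fq_dependent q k n \<longleftrightarrow> (\<exists>\<alpha>. (\<forall>i<k. \<alpha> i \<in> {0..<int q}) \<and> (\<exists>i<k. \<alpha> i \<noteq> 0) \<and>
    (\<forall>p. prime p \<and> p < q \<longrightarrow> int q dvd (\<Sum>i<k. \<alpha> i * int (multiplicity p (n i)))))"
proof -
  define P where "P = {p. prime p \<and> p < q}"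
  have "(\<forall>v. (\<forall>p. v p \<in> {0..<int q}) \<longrightarrow> (\<Sum>i<k. \<alpha> i * Lform q (n i) v) mod int q = 0)
      \<longleftrightarrow> (\<forall>p\<in>P. int q dvd (\<Sum>i<k. \<alpha> i * int (multiplicity p (n i))))" for \<alpha>
  proof safe
    fix p assume all: "\<forall>v. (\<forall>p. v p \<in> {0..<int q}) \<longrightarrow> (\<Sum>i<k. \<alpha> i * Lform q (n i) v) mod int q = 0"
      and "p \<in> P"
    define v where "v x = (if x = p then 1 else 0 :: int)" for x
    have "(\<Sum>x\<in>P. v x * (\<Sum>i<k. \<alpha> i * int (multiplicity x (n i)))) =
        (\<Sum>x\<in>P. if x = p then (\<Sum>i<k. \<alpha> i * int (multiplicity x (n i))) else 0)"
      by (rule sum.cong) (simp_all add: v_def)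
    also have "\<dots> = (\<Sum>i<k. \<alpha> i * int (multiplicity p (n i)))"
      using \<open>p \<in> P\<close> by (simp add: P_def)
    finally have v_picks_p: "(\<Sum>x\<in>P. v x * (\<Sum>i<k. \<alpha> i * int (multiplicity x (n i)))) =
        (\<Sum>i<k. \<alpha> i * int (multiplicity p (n i)))" .
    have "\<forall>x. v x \<in> {0..<int q}" using assms by (simp add: v_def)
    then have "(\<Sum>i<k. \<alpha> i * Lform q (n i) v) mod int q = 0" using all by blast
    then show "int q dvd (\<Sum>i<k. \<alpha> i * int (multiplicity p (n i)))"
      using sum_Lform_mod[of \<alpha> q n v] v_picks_p by (simp add: P_def dvd_eq_mod_eq_0)
  next
    fix v :: "nat \<Rightarrow> int"
    assume "\<forall>p\<in>P. int q dvd (\<Sum>i<k. \<alpha> i * int (multiplicity p (n i)))"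
    then have "int q dvd (\<Sum>p\<in>P. v p * (\<Sum>i<k. \<alpha> i * int (multiplicity p (n i))))"
      by (auto intro!: dvd_sum)
    then show "(\<Sum>i<k. \<alpha> i * Lform q (n i) v) mod int q = 0"
      by (simp add: sum_Lform_mod P_def dvd_eq_mod_eq_0)
  qed
  then show ?thesis unfolding Fq_dependent_def P_def by simp
qed

lemma not_dvd_div_Gcd:
  fixes \<beta> :: "nat \<Rightarrow> int"
  assumes "\<not> is_unit q" "i \<in> A" "\<beta> i \<noteq> 0"
  shows "\<exists>i\<in>A. \<not> q dvd \<beta> i div Gcd (\<beta> ` A)"
proof (rule ccontr)
  define g where "g = Gcd (\<beta> ` A)"
  assume all_dvd: "\<not> ?thesis"
  have "g \<noteq> 0" using assms by (auto simp: g_def)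
  have "q * g dvd \<beta> i" if "i \<in> A" for i
    using that all_dvd \<open>g \<noteq> 0\<close> by (auto simp: g_def dvd_div_iff_mult)
  then have "q * g dvd Gcd (\<beta> ` A)" by (intro Gcd_greatest) blast
  then have "q * g dvd g" unfolding g_def .
  then have "q dvd 1" using \<open>g \<noteq> 0\<close> by (metis dvd_mult_cancel_right mult_1)
  then show False using assms(1) by contradiction
qed

lemma mult_dependent_imp_Fq_dependent:
  assumes "prime q" "\<forall>i<k. n i \<in> {1..q-1}" "mult_dependent k n"
  shows "Fq_dependent q k n"
proof -
  obtain \<beta> i0 where "i0 < k" "\<beta> i0 \<noteq> 0"
    and rel: "\<And>p. prime p \<and> p < q \<Longrightarrow> (\<Sum>i<k. \<beta> i * int (multiplicity p (n i))) = 0"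
    using assms(2,3) mult_dependent_iff_relation by blast
  define g where "g = Gcd (\<beta> ` {..<k})"
  define \<alpha> where "\<alpha> i = \<beta> i div g mod int q" for i
  have "g \<noteq> 0" using \<open>i0 < k\<close> \<open>\<beta> i0 \<noteq> 0\<close> by (auto simp: g_def)
  have g_dvd: "g dvd \<beta> i" if "i < k" for i using that by (simp add: g_def)
  have "\<not> is_unit (int q)" using prime_gt_1_nat[OF assms(1)] by simp
  then obtain i1 where "i1 < k" "\<not> int q dvd \<beta> i1 div g"
    using not_dvd_div_Gcd[of "int q" i0 "{..<k}" \<beta>] \<open>i0 < k\<close> \<open>\<beta> i0 \<noteq> 0\<close>
    unfolding g_def by blast
  then have "\<alpha> i1 \<noteq> 0" by (simp add: \<alpha>_def dvd_eq_mod_eq_0)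
  moreover have "\<forall>i<k. \<alpha> i \<in> {0..<int q}"
    using assms(1) by (simp add: \<alpha>_def prime_gt_0_nat)
  moreover have "int q dvd (\<Sum>i<k. \<alpha> i * int (multiplicity p (n i)))"
    if "prime p \<and> p < q" for p
  proof -
    have "g * (\<Sum>i<k. \<beta> i div g * int (multiplicity p (n i))) =
        (\<Sum>i<k. \<beta> i * int (multiplicity p (n i)))"
      unfolding sum_distrib_left
      by (intro sum.cong refl) (simp add: mult.assoc[symmetric] g_dvd)
    then have rel': "(\<Sum>i<k. \<beta> i div g * int (multiplicity p (n i))) = 0"
      using rel[OF that] \<open>g \<noteq> 0\<close> by simp
    have "(\<Sum>i<k. \<alpha> i * int (multiplicity p (n i))) mod int q =
        (\<Sum>i<k. \<alpha> i * int (multiplicity p (n i)) mod int q) mod int q"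
      by (rule mod_sum_eq[symmetric])
    also have "\<dots> = (\<Sum>i<k. \<beta> i div g * int (multiplicity p (n i)) mod int q) mod int q"
      by (simp add: \<alpha>_def mod_mult_left_eq)
    also have "\<dots> = 0"
      by (simp only: mod_sum_eq rel') simp
    finally show ?thesis by (simp add: dvd_eq_mod_eq_0)
  qed
  ultimately show ?thesis
    unfolding Fq_dependent_iff_relation[OF prime_ge_2_nat[OF assms(1)]]
    using \<open>i1 < k\<close> by blast
qed

definition gram_mat :: "nat \<Rightarrow> 'b set \<Rightarrow> (nat \<Rightarrow> 'b \<Rightarrow> 'a :: comm_semiring_0) \<Rightarrow> 'a mat" where
  "gram_mat k P e = mat k k (\<lambda>(i, j). \<Sum>p\<in>P. e i p * e j p)"

lemma gram_mat_carrier [simp]: "gram_mat k P e \<in> carrier_mat k k"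
  by (simp add: gram_mat_def)

lemma index_gram_mat [simp]:
  "i < k \<Longrightarrow> j < k \<Longrightarrow> gram_mat k P e $$ (i, j) = (\<Sum>p\<in>P. e i p * e j p)"
  by (simp add: gram_mat_def)

lemma quadratic_form_gram:
  fixes v :: "nat \<Rightarrow> 'a :: comm_semiring_1"
  shows "(\<Sum>i\<in>I. v i * (\<Sum>j\<in>I. (\<Sum>p\<in>P. e i p * e j p) * v j)) = (\<Sum>p\<in>P. (\<Sum>i\<in>I. v i * e i p)\<^sup>2)"
proof -
  have "(\<Sum>i\<in>I. v i * (\<Sum>j\<in>I. (\<Sum>p\<in>P. e i p * e j p) * v j)) =
      (\<Sum>i\<in>I. \<Sum>j\<in>I. \<Sum>p\<in>P. v i * e i p * (v j * e j p))"
    by (simp add: sum_distrib_left sum_distrib_right mult_ac)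
  also have "\<dots> = (\<Sum>p\<in>P. \<Sum>i\<in>I. \<Sum>j\<in>I. v i * e i p * (v j * e j p))"
    by (simp add: sum.swap[of _ P])
  also have "\<dots> = (\<Sum>p\<in>P. (\<Sum>i\<in>I. v i * e i p)\<^sup>2)"
    by (simp add: power2_eq_square sum_product)
  finally show ?thesis .
qed

lemma det_gram_mat_nonzero:
  fixes e :: "nat \<Rightarrow> 'b \<Rightarrow> 'a :: linordered_idom"
  assumes "finite P" and indep: "\<And>v. \<forall>p\<in>P. (\<Sum>i<k. v i * e i p) = 0 \<Longrightarrow> \<forall>i<k. v i = 0"
  shows "det (gram_mat k P e) \<noteq> 0"
proof
  assume "det (gram_mat k P e) = 0"
  then obtain v where v: "v \<in> carrier_vec k" "v \<noteq> 0\<^sub>v k" "gram_mat k P e *\<^sub>v v = 0\<^sub>v k"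
    using det_0_iff_vec_prod_zero[OF gram_mat_carrier] by blast
  have "(\<Sum>j<k. (\<Sum>p\<in>P. e i p * e j p) * v $ j) = 0" if "i < k" for i
  proof -
    have "(\<Sum>j<k. (\<Sum>p\<in>P. e i p * e j p) * v $ j) = (\<Sum>j<k. gram_mat k P e $$ (i, j) * v $ j)"
      using that by (intro sum.cong) simp_all
    also have "\<dots> = (gram_mat k P e *\<^sub>v v) $ i"
      using that v(1) by (simp add: carrier_matD[OF gram_mat_carrier] scalar_prod_def atLeast0LessThan)
    finally show ?thesis using v(3) that by simp
  qed
  then have "(\<Sum>p\<in>P. (\<Sum>i<k. v $ i * e i p)\<^sup>2) = 0"
    by (simp add: quadratic_form_gram[symmetric])
  then have "\<forall>p\<in>P. (\<Sum>i<k. v $ i * e i p) = 0"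
    using \<open>finite P\<close> by (simp add: sum_nonneg_eq_0_iff)
  then have "\<forall>i<k. v $ i = 0" by (rule indep)
  then show False using v(1,2) by (auto simp: vec_eq_iff)
qed

text \<open>Multiplying the kernel relation by the adjugate of \<open>A\<close> gives \<open>q dvd \<alpha>\<^sub>i\<^sub>0 \<cdot> det A\<close>.\<close>
lemma prime_dvd_det_if_left_kernel:
  fixes A :: "'a :: idom mat"
  assumes A: "A \<in> carrier_mat k k" and "prime_elem q" "i0 < k" "\<not> q dvd \<alpha> i0"
    and kernel: "\<And>j. j < k \<Longrightarrow> q dvd (\<Sum>i<k. \<alpha> i * A $$ (i, j))"
  shows "q dvd det A"
proof -
  let ?B = "adj_mat A"
  have "\<alpha> i * (A * ?B) $$ (i, i0) = (if i = i0 then \<alpha> i0 * det A else 0)" if "i < k" for i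
    using adj_mat(2)[OF A] that \<open>i0 < k\<close> by simp
  then have "\<alpha> i0 * det A = (\<Sum>i<k. \<alpha> i * (A * ?B) $$ (i, i0))"
    using \<open>i0 < k\<close> by simp
  also have "\<dots> = (\<Sum>i<k. \<Sum>j<k. ?B $$ (j, i0) * (\<alpha> i * A $$ (i, j)))"
    using adj_mat(1)[OF A] A \<open>i0 < k\<close>
    by (intro sum.cong refl) (auto simp: scalar_prod_def lessThan_atLeast0 sum_distrib_left mult_ac)
  also have "\<dots> = (\<Sum>j<k. ?B $$ (j, i0) * (\<Sum>i<k. \<alpha> i * A $$ (i, j)))"
    by (subst sum.swap) (simp add: sum_distrib_left)
  finally have "q dvd \<alpha> i0 * det A"
    using kernel by (auto intro!: dvd_sum)
  then show ?thesis
    using assms(2,4) by (simp add: prime_elem_dvd_mult_iff)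
qed

lemma abs_det_le_fact_mult_power:
  fixes A :: "'a :: linordered_idom mat"
  assumes A: "A \<in> carrier_mat k k" and bound: "\<And>i j. i < k \<Longrightarrow> j < k \<Longrightarrow> \<bar>A $$ (i, j)\<bar> \<le> b"
  shows "\<bar>det A\<bar> \<le> fact k * b ^ k"
proof -
  let ?S = "{p. p permutes {0..<k}}"
  have "\<bar>det A\<bar> \<le> (\<Sum>p\<in>?S. \<bar>signof p * (\<Prod>i = 0..<k. A $$ (i, p i))\<bar>)"
    unfolding det_def'[OF A] by (rule sum_abs)
  also have "\<dots> \<le> (\<Sum>p\<in>?S. b ^ k)"
  proof (rule sum_mono)
    fix p assume "p \<in> ?S"
    then have "\<bar>A $$ (i, p i)\<bar> \<le> b" if "i \<in> {0..<k}" for i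
      using bound that by (auto simp: permutes_in_image)
    then have "(\<Prod>i = 0..<k. \<bar>A $$ (i, p i)\<bar>) \<le> (\<Prod>i = 0..<k. b)"
      by (intro prod_mono) auto
    then show "\<bar>signof p * (\<Prod>i = 0..<k. A $$ (i, p i))\<bar> \<le> b ^ k"
      by (simp add: abs_mult abs_prod sign_def)
  qed
  also have "\<dots> = fact k * b ^ k"
    using card_permutations[of "{0..<k}" k] by simp
  finally show ?thesis .
qed

lemma abs_det_gram_mat_le:
  fixes e :: "nat \<Rightarrow> 'b \<Rightarrow> 'a :: linordered_idom"
  assumes "finite P" "\<And>i p. 0 \<le> e i p" "\<And>i. i < k \<Longrightarrow> (\<Sum>p\<in>P. e i p) \<le> T"
  shows "\<bar>det (gram_mat k P e)\<bar> \<le> fact k * (T\<^sup>2) ^ k"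
proof (rule abs_det_le_fact_mult_power[OF gram_mat_carrier])
  fix i j assume "i < k" "j < k"
  have "0 \<le> T" using assms(3)[OF \<open>i < k\<close>] assms(2) sum_nonneg order_trans by metis
  have "(\<Sum>p\<in>P. e i p * e j p) \<le> (\<Sum>p\<in>P. e i p * (\<Sum>p\<in>P. e j p))"
    using assms(1,2) by (intro sum_mono mult_left_mono member_le_sum) auto
  also have "\<dots> = (\<Sum>p\<in>P. e i p) * (\<Sum>p\<in>P. e j p)"
    by (simp add: sum_distrib_right)
  also have "\<dots> \<le> T\<^sup>2"
    unfolding power2_eq_square using assms \<open>i < k\<close> \<open>j < k\<close> \<open>0 \<le> T\<close>
    by (intro mult_mono) (auto intro: sum_nonneg)
  finally show "\<bar>gram_mat k P e $$ (i, j)\<bar> \<le> T\<^sup>2"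
    using \<open>i < k\<close> \<open>j < k\<close> assms(2) by (simp add: sum_nonneg)
qed

lemma two_power_sum_multiplicity_le:
  fixes m :: nat
  assumes "0 < m" "m < q"
  shows "2 ^ (\<Sum>p\<in>{p. prime p \<and> p < q}. multiplicity p m) \<le> m"
proof -
  let ?P = "{p. prime p \<and> p < q}"
  have "prime_factors m \<subseteq> ?P"
    using assms by (auto simp: in_prime_factors_iff) (meson dvd_imp_le le_less_trans)
  then have "(\<Prod>p\<in>prime_factors m. p ^ multiplicity p m) = (\<Prod>p\<in>?P. p ^ multiplicity p m)"
    using assms(1)
    by (intro prod.mono_neutral_left) (auto intro!: not_dvd_imp_multiplicity_0 simp: in_prime_factors_iff)
  then have "m = (\<Prod>p\<in>?P. p ^ multiplicity p m)"
    using assms(1) prod_prime_factors[of m] by simp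
  moreover have "2 ^ (\<Sum>p\<in>?P. multiplicity p m) \<le> (\<Prod>p\<in>?P. p ^ multiplicity p m)"
    unfolding power_sum by (auto intro!: prod_mono power_mono prime_ge_2_nat)
  ultimately show ?thesis by simp
qed

lemma fact_mult_power_less:
  fixes q k :: nat and T :: real
  assumes "1 \<le> k" "real k < plog (real q) / (10 * plog2 (real q))"
    and "0 \<le> T" "T * ln 2 \<le> ln (real q)"
  shows "fact k * (T\<^sup>2) ^ k < real q"
proof -
  define x where "x = ln (real q)"
  define y where "y = plog2 (real q)"
  have "2 \<le> y" by (simp add: y_def plog2_def plog_def)
  have "1 * (10 * y) \<le> real k * (10 * y)" using assms(1) \<open>2 \<le> y\<close> by (intro mult_right_mono) auto
  moreover have "real k * (10 * y) < plog (real q)"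
    using assms(2) \<open>2 \<le> y\<close> by (simp add: y_def less_divide_eq)
  ultimately have "10 * y < plog (real q)" by linarith
  then have "20 < x" "real k * (10 * y) < x"
    using assms(2) \<open>2 \<le> y\<close> by (auto simp: x_def y_def plog_def pos_less_divide_eq)
  have "ln x \<le> y" using \<open>20 < x\<close> by (simp add: x_def y_def plog2_def plog_def)
  have "ln 2 \<le> (1::real)" using ln_le_minus_one[of 2] by simp
  have "1/2 \<le> ln (2::real)" using ln_le_minus_one[of "1/2"] by (simp add: ln_div)
  then have "T * (1/2) \<le> T * ln 2" using assms(3) by (rule mult_left_mono)
  then have "T \<le> 2 * x" using assms(4) unfolding x_def by linarith
  have "real k * 1 \<le> real k * (10 * y)" using \<open>2 \<le> y\<close> by (intro mult_left_mono) auto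
  then have "real k \<le> x" using \<open>real k * (10 * y) < x\<close> by linarith
  have "fact k \<le> real k ^ k"
    using fact_le_power[of k, where 'a = real] by (simp only: of_nat_power)
  also have "\<dots> \<le> x ^ k" using \<open>real k \<le> x\<close> by (rule power_mono) simp
  finally have "fact k \<le> x ^ k" .
  moreover have "(T\<^sup>2) ^ k \<le> ((2 * x)\<^sup>2) ^ k"
    using \<open>T \<le> 2 * x\<close> assms(3) by (intro power_mono) simp_all
  ultimately have "fact k * (T\<^sup>2) ^ k \<le> x ^ k * ((2 * x)\<^sup>2) ^ k"
    using \<open>20 < x\<close> by (intro mult_mono) simp_all
  also have "\<dots> = (4 * x ^ 3) ^ k"
  proof -
    have "x * (2 * x)\<^sup>2 = 4 * x ^ 3" by (simp add: power2_eq_square power3_eq_cube)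
    then show ?thesis by (simp only: power_mult_distrib[symmetric])
  qed
  also have "\<dots> = exp (real k * ln (4 * x ^ 3))"
    using \<open>20 < x\<close> by (simp add: exp_of_nat_mult)
  also have "\<dots> < exp x"
  proof -
    have "ln (4::real) = 2 * ln 2" using ln_realpow[of 2 2] by simp
    then have "ln (4 * x ^ 3) = 2 * ln 2 + 3 * ln x"
      using \<open>20 < x\<close> by (simp add: ln_mult ln_realpow)
    also have "\<dots> \<le> 4 * y" using \<open>ln 2 \<le> 1\<close> \<open>ln x \<le> y\<close> \<open>2 \<le> y\<close> by linarith
    finally have "real k * ln (4 * x ^ 3) \<le> real k * (10 * y)"
      using \<open>2 \<le> y\<close> by (intro mult_left_mono) auto
    then show ?thesis using \<open>real k * (10 * y) < x\<close> by simp
  qed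
  also have "\<dots> = real q" using \<open>20 < x\<close> by (cases "q = 0") (simp_all add: x_def)
  finally show ?thesis .
qed

definition exponent_gram_mat :: "nat \<Rightarrow> nat \<Rightarrow> (nat \<Rightarrow> nat) \<Rightarrow> int mat" where
  "exponent_gram_mat q k n =
     gram_mat k {p. prime p \<and> p < q} (\<lambda>i p. int (multiplicity p (n i)))"

lemma prime_dvd_det_exponent_gram_mat:
  assumes "prime q" "Fq_dependent q k n"
  shows "int q dvd det (exponent_gram_mat q k n)"
proof -
  define P where "P = {p. prime p \<and> p < q}"
  define e where "e i p = int (multiplicity p (n i))" for i p
  obtain \<alpha> i0 where "\<forall>i<k. \<alpha> i \<in> {0..<int q}" "i0 < k" "\<alpha> i0 \<noteq> 0"
    and rel: "\<And>p. p \<in> P \<Longrightarrow> int q dvd (\<Sum>i<k. \<alpha> i * e i p)"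
    using assms Fq_dependent_iff_relation[OF prime_ge_2_nat] by (auto simp: P_def e_def)
  then have "\<not> int q dvd \<alpha> i0" using zdvd_imp_le[of "int q" "\<alpha> i0"] by fastforce
  moreover have "int q dvd (\<Sum>i<k. \<alpha> i * gram_mat k P e $$ (i, j))" if "j < k" for j
  proof -
    have "(\<Sum>i<k. \<alpha> i * gram_mat k P e $$ (i, j)) = (\<Sum>p\<in>P. e j p * (\<Sum>i<k. \<alpha> i * e i p))"
      using that by (simp add: sum_distrib_left mult_ac sum.swap[of _ P])
    then show ?thesis using rel by (simp add: dvd_sum)
  qed
  ultimately show ?thesis
    unfolding exponent_gram_mat_def P_def[symmetric] e_def[symmetric]
    using assms(1) \<open>i0 < k\<close> by (intro prime_dvd_det_if_left_kernel[OF gram_mat_carrier]) simp_all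
qed

lemma det_exponent_gram_mat_nonzero:
  assumes "\<forall>i<k. n i \<in> {1..q-1}" "\<not> mult_dependent k n"
  shows "det (exponent_gram_mat q k n) \<noteq> 0"
  unfolding exponent_gram_mat_def
proof (rule det_gram_mat_nonzero)
  fix \<beta> assume "\<forall>p\<in>{p. prime p \<and> p < q}. (\<Sum>i<k. \<beta> i * int (multiplicity p (n i))) = 0"
  then show "\<forall>i<k. \<beta> i = 0"
    using assms mult_dependent_iff_relation by blast
qed simp

lemma abs_det_exponent_gram_mat_less:
  assumes "1 \<le> k" "real k < plog (real q) / (10 * plog2 (real q))" "\<forall>i<k. n i \<in> {1..q-1}"
  shows "\<bar>det (exponent_gram_mat q k n)\<bar> < int q"
proof -
  define s where "s i = (\<Sum>p\<in>{p. prime p \<and> p < q}. multiplicity p (n i))" for i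
  define T where "T = Max (s ` {..<k})"
  have "T \<in> s ` {..<k}" unfolding T_def using assms(1) by (intro Max_in) (auto simp: lessThan_empty_iff)
  then obtain i where "i < k" "T = s i" by auto
  then have "2 ^ T < q"
    using assms(3) two_power_sum_multiplicity_le[of "n i" q] by (force simp: s_def)
  then have "ln (2 ^ T) < ln (real q)"
    by (subst ln_less_cancel_iff) (simp_all flip: of_nat_less_iff)
  then have "real T * ln 2 \<le> ln (real q)" by (simp add: ln_realpow)
  have "\<bar>det (exponent_gram_mat q k n)\<bar> \<le> fact k * (int T ^ 2) ^ k"
    unfolding exponent_gram_mat_def
  proof (rule abs_det_gram_mat_le)
    fix i assume "i < k"
    then have "s i \<le> T" unfolding T_def by (intro Max_ge) auto
    then have "int (s i) \<le> int T" by (simp only: of_nat_le_iff)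
    then show "(\<Sum>p\<in>{p. prime p \<and> p < q}. int (multiplicity p (n i))) \<le> int T"
      by (simp add: s_def)
  qed simp_all
  also have "\<dots> < int q"
  proof -
    have "real_of_int (fact k * (int T ^ 2) ^ k) < real_of_int (int q)"
      using fact_mult_power_less[OF assms(1,2) _ \<open>real T * ln 2 \<le> ln (real q)\<close>] by simp
    then show ?thesis by (simp only: of_int_less_iff)
  qed
  finally show ?thesis .
qed

lemma Fq_dependent_imp_mult_dependent:
  assumes "prime q" "real k < plog (real q) / (10 * plog2 (real q))"
    and "\<forall>i<k. n i \<in> {1..q-1}" "Fq_dependent q k n"
  shows "mult_dependent k n"
proof (rule ccontr)
  assume "\<not> mult_dependent k n"
  then have "det (exponent_gram_mat q k n) \<noteq> 0"
    by (rule det_exponent_gram_mat_nonzero[OF assms(3)])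
  moreover have "int q dvd det (exponent_gram_mat q k n)"
    using assms(1,4) by (rule prime_dvd_det_exponent_gram_mat)
  ultimately have "\<bar>int q\<bar> \<le> \<bar>det (exponent_gram_mat q k n)\<bar>" by (rule dvd_imp_le_int)
  moreover have "1 \<le> k" using assms(4) by (auto simp: Fq_dependent_def)
  ultimately show False using abs_det_exponent_gram_mat_less[OF _ assms(2,3)] by simp
qed

theorem lemma3p2:
  fixes q k :: nat and n :: "nat \<Rightarrow> nat"
  assumes "prime q"
  shows "((\<forall>i<k. n i \<in> {1..q-1}) \<and> mult_dependent k n \<longrightarrow> Fq_dependent q k n)
    \<and> (real k < plog (real q) / (10 * plog2 (real q)) \<and> (\<forall>i<k. n i \<in> {2..q-1}) \<longrightarrow>
         (mult_independent k n \<longleftrightarrow> Fq_independent q k n))"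
proof (intro conjI impI)
  assume "(\<forall>i<k. n i \<in> {1..q-1}) \<and> mult_dependent k n"
  then show "Fq_dependent q k n" using mult_dependent_imp_Fq_dependent[OF assms] by blast
next
  assume small: "real k < plog (real q) / (10 * plog2 (real q)) \<and> (\<forall>i<k. n i \<in> {2..q-1})"
  then have "\<forall>i<k. n i \<in> {1..q-1}" by auto
  then show "mult_independent k n \<longleftrightarrow> Fq_independent q k n"
    unfolding mult_independent_def Fq_independent_def
    using mult_dependent_imp_Fq_dependent[OF assms] Fq_dependent_imp_mult_dependent[OF assms] small
    by blast
qed

end
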